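(* Let $k\ge 2$ and $n>t\geq 1$ be integers. Then the number $B_k(n,t)$ of length-$n$ words over $\Sigma_k$ that have a unique border, this border having length $t$, satisfies \[ B_k(n,t)=\begin{cases} 0, & \text{if } n<2t;\\ u_t k^{n-2t}-\sum_{i=2t}^{\lfloor n/2\rfloor}B_k(i,t)k^{n-2i}, & \text{if } n\ge 2t \text{ and } n+t \text{ is odd};\\ u_t k^{n-2t}-B_k\!\left(\tfrac{n+t}{2},t\right)-\sum_{i=2t}^{\lfloor n/2\rfloor}B_k(i,t)k^{n-2i}, & \text{if } n\ge 2t \text{ and } n+t \text{ is even}. \end{cases} \]
   Context: $\Sigma_k=\{0,1,\ldots,k-1\}$. A border of a word $w$ is a non-empty word that is both a proper prefix and a proper suffix of $w$; $w$ is unbordered if it has no border. A word has a unique border if it has exactly one border. $u_t$ denotes the number of unbordered words of length $t$ over $\Sigma_k$ (with $u_0=1$, $u_n=ku_{n-1}-u_{n/2}$ for even $n>0$, $u_n=ku_{n-1}$ for odd $n$). An empty sum is zero. *)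

theory Defs
  imports Main "HOL-Library.Sublist"
begin

definition words :: "nat \<Rightarrow> nat \<Rightarrow> nat list set" where
  "words k n = {w. length w = n \<and> set w \<subseteq> {..<k}}"

definition is_border :: "'a list \<Rightarrow> 'a list \<Rightarrow> bool" where
  "is_border v w \<longleftrightarrow> v \<noteq> [] \<and> strict_prefix v w \<and> strict_suffix v w"

definition unbordered :: "'a list \<Rightarrow> bool" where
  "unbordered w \<longleftrightarrow> \<not> (\<exists>v. is_border v w)"

definition u :: "nat \<Rightarrow> nat \<Rightarrow> nat" where
  "u k t = card {w \<in> words k t. unbordered w}"

definition unique_border_len :: "'a list \<Rightarrow> nat \<Rightarrow> bool" where
  "unique_border_len w t \<longleftrightarrow> (\<exists>v. {v'. is_border v' w} = {v} \<and> length v = t)"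

definition B :: "nat \<Rightarrow> nat \<Rightarrow> nat \<Rightarrow> nat" where
  "B k n t = card {w \<in> words k n. unique_border_len w t}"

end

theory Submission
  imports Defs
begin

text \<open>
  Count the words of length \<open>n\<close> whose shortest border has length \<open>t\<close>. Such a word is
  \<open>v x v\<close> with \<open>v\<close> unbordered of length \<open>t\<close>, so there are \<open>u\<^sub>t k\<^bsup>n-2t\<^esub>\<close> of them.
  Either \<open>t\<close> is its only border, or it has a second-shortest border, of length \<open>m\<close> say, and
  then its prefix \<open>p\<close> of length \<open>m\<close> has the unique border \<open>t\<close>. If \<open>2m \<le> n\<close> the word is
  \<open>p y p\<close> with \<open>y\<close> arbitrary, giving \<open>B\<^sub>k(m,t) k\<^bsup>n-2m\<^esub>\<close> words; if \<open>2m > n\<close> the two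
  occurrences of \<open>p\<close> overlap, so the word is determined by \<open>p\<close> and \<open>p\<close> has the border
  \<open>2m - n\<close>, which forces \<open>2m - n = t\<close>.
\<close>

text \<open>A border is determined by its length \<open>l\<close> (it is \<open>take l w\<close>), so borders are handled
  through their lengths.\<close>

definition has_border :: "'a list \<Rightarrow> nat \<Rightarrow> bool" where
  "has_border w l \<longleftrightarrow> 0 < l \<and> l < length w \<and> take l w = drop (length w - l) w"

lemma prefix_iff_take: "prefix v w \<longleftrightarrow> take (length v) w = v"
proof
  show "take (length v) w = v \<Longrightarrow> prefix v w"
    by (metis take_is_prefix)
qed (auto simp: prefix_def)

lemma suffix_iff_drop: "suffix v w \<longleftrightarrow> drop (length w - length v) w = v"
proof
  show "drop (length w - length v) w = v \<Longrightarrow> suffix v w"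
    by (metis suffix_drop)
qed (auto simp: suffix_def)

lemma is_border_iff: "is_border v w \<longleftrightarrow> has_border w (length v) \<and> take (length v) w = v"
proof -
  have "v \<noteq> w \<longleftrightarrow> length v < length w" if "take (length v) w = v"
    using that take_all_iff[of "length v" w] by (metis not_le)
  then show ?thesis
    unfolding is_border_def has_border_def strict_prefix_def strict_suffix_def
      prefix_iff_take suffix_iff_drop by auto
qed

lemma is_border_take: "has_border w l \<Longrightarrow> is_border (take l w) w"
  by (simp add: is_border_iff has_border_def min_def)

lemma unbordered_iff: "unbordered w \<longleftrightarrow> (\<forall>l. \<not> has_border w l)"
  unfolding unbordered_def by (metis is_border_iff is_border_take)

lemma unique_border_len_iff:
  "unique_border_len w t \<longleftrightarrow> has_border w t \<and> (\<forall>l. has_border w l \<longrightarrow> l = t)"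
proof
  assume "unique_border_len w t"
  then obtain v where v: "{v'. is_border v' w} = {v}" "length v = t"
    unfolding unique_border_len_def by auto
  then have "has_border w t"
    using is_border_iff by blast
  moreover have "l = t" if "has_border w l" for l
  proof -
    have "take l w = v"
      using v(1) is_border_take[OF that] by blast
    moreover have "length (take l w) = l"
      using that by (simp add: has_border_def)
    ultimately show "l = t"
      using v(2) by simp
  qed
  ultimately show "has_border w t \<and> (\<forall>l. has_border w l \<longrightarrow> l = t)"
    by blast
next
  assume t: "has_border w t \<and> (\<forall>l. has_border w l \<longrightarrow> l = t)"
  have "{v. is_border v w} = {take t w}"
  proof (intro set_eqI iffI)
    fix v
    assume "v \<in> {v. is_border v w}"
    then have "has_border w (length v)" "take (length v) w = v"
      by (simp_all add: is_border_iff)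
    then show "v \<in> {take t w}"
      using t by force
  next
    fix v
    assume "v \<in> {take t w}"
    then show "v \<in> {v. is_border v w}"
      using is_border_take t by blast
  qed
  moreover have "length (take t w) = t"
    using t by (simp add: has_border_def)
  ultimately show "unique_border_len w t"
    unfolding unique_border_len_def by blast
qed

lemma has_border_take_iff:
  assumes "has_border w l"
  shows "has_border (take l w) j \<longleftrightarrow> has_border w j \<and> j < l"
proof -
  have l: "l < length w" "take l w = drop (length w - l) w"
    using assms unfolding has_border_def by auto
  have "take j (take l w) = take j w" if "j < l"
    using that by simp
  moreover have "drop (l - j) (take l w) = drop (length w - j) w" if "j < l"
    using l that by (simp add: add.commute)
  ultimately show ?thesis
    using l(1) unfolding has_border_def by (auto simp: min_def)
qed

lemma has_border_overlap:
  assumes "has_border w l" and "length w < 2 * l"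
  shows "has_border w (2 * l - length w)"
proof -
  let ?n = "length w"
  have l: "l < ?n" "take l w = drop (?n - l) w"
    using assms unfolding has_border_def by auto
  have "drop (?n - l) (take l w) = take (2 * l - ?n) (drop (?n - l) w)"
    using take_drop[of "2 * l - ?n" "?n - l" w] assms(2) l(1) by simp
  also have "\<dots> = take (2 * l - ?n) (take l w)"
    using l by simp
  finally have "has_border (take l w) (2 * l - ?n)"
    using l assms(2) unfolding has_border_def by (simp add: min_def)
  then show ?thesis
    using has_border_take_iff[OF assms(1)] by blast
qed

lemma unique_border_len_length_ge:
  assumes "unique_border_len w t"
  shows "2 * t \<le> length w"
proof (rule ccontr)
  assume short: "\<not> 2 * t \<le> length w"
  have t: "has_border w t" "\<forall>l. has_border w l \<longrightarrow> l = t"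
    using assms unique_border_len_iff by blast+
  have "has_border w (2 * t - length w)"
    using has_border_overlap[OF t(1)] short by simp
  then have "2 * t - length w = t"
    using t(2) by blast
  then show False
    using t(1) short by (simp add: has_border_def)
qed

lemma B_eq_0:
  assumes "n < 2 * t"
  shows "B k n t = 0"
proof -
  have "{w \<in> words k n. unique_border_len w t} = {}"
    using assms unique_border_len_length_ge by (fastforce simp: words_def)
  then show ?thesis
    unfolding B_def by (simp only: card.empty)
qed

lemma unbordered_take_iff:
  assumes "has_border w l"
  shows "unbordered (take l w) \<longleftrightarrow> (\<forall>j<l. \<not> has_border w j)"
  using has_border_take_iff[OF assms] by (auto simp: unbordered_iff)

lemma unique_border_len_take_iff:
  assumes "has_border w m"
  shows "unique_border_len (take m w) t \<longleftrightarrow>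
    t < m \<and> has_border w t \<and> (\<forall>j<m. has_border w j \<longrightarrow> j = t)"
  unfolding unique_border_len_iff has_border_take_iff[OF assms] by blast

lemma has_border_append: "0 < length v \<Longrightarrow> has_border (v @ x @ v) (length v)"
  by (simp add: has_border_def)

lemma has_border_split:
  assumes "has_border w l" and "2 * l \<le> length w"
  shows "take l w @ take (length w - 2 * l) (drop l w) @ take l w = w"
proof -
  have "drop (length w - 2 * l) (drop l w) = take l w"
    using assms by (simp add: has_border_def add.commute)
  then show ?thesis
    by (metis append_take_drop_id)
qed

lemma words_eq_lists: "words k n = {w. set w \<subseteq> {..<k} \<and> length w = n}"
  by (auto simp: words_def)

lemma card_words: "card (words k n) = k ^ n"
  by (simp add: words_eq_lists card_lists_length_eq)

lemma finite_words: "finite (words k n)"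
  by (simp add: words_eq_lists finite_lists_length_eq)

lemma take_drop_in_words:
  assumes "w \<in> words k n" and "i + m \<le> n"
  shows "take m (drop i w) \<in> words k m"
  using assms by (auto simp: words_def dest: in_set_takeD in_set_dropD)

definition border_words :: "nat \<Rightarrow> nat \<Rightarrow> nat \<Rightarrow> (nat list \<Rightarrow> bool) \<Rightarrow> nat list set" where
  "border_words k n m P = {w \<in> words k n. has_border w m \<and> P (take m w)}"

lemma card_border_words_le_half:
  assumes "0 < m" and "2 * m \<le> n"
  shows "card (border_words k n m P) = card {v \<in> words k m. P v} * k ^ (n - 2 * m)"
proof -
  let ?f = "\<lambda>(v, x). v @ x @ v"
  let ?g = "\<lambda>w. (take m w, take (n - 2 * m) (drop m w))"
  have "bij_betw ?f ({v \<in> words k m. P v} \<times> words k (n - 2 * m)) (border_words k n m P)"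
  proof (rule bij_betw_byWitness[where f' = ?g])
    show "\<forall>a \<in> {v \<in> words k m. P v} \<times> words k (n - 2 * m). ?g (?f a) = a"
      by (auto simp: words_def)
    show "\<forall>w \<in> border_words k n m P. ?f (?g w) = w"
      using assms(2) has_border_split by (auto simp: border_words_def words_def)
    show "?f ` ({v \<in> words k m. P v} \<times> words k (n - 2 * m)) \<subseteq> border_words k n m P"
      using assms has_border_append by (auto simp: border_words_def words_def)
    show "?g ` border_words k n m P \<subseteq> {v \<in> words k m. P v} \<times> words k (n - 2 * m)"
      using assms take_drop_in_words[of _ k n 0 m] take_drop_in_words[of _ k n m]
      by (auto simp: border_words_def)
  qed
  then show ?thesis
    by (simp add: bij_betw_same_card[symmetric] card_cartesian_product card_words)
qed

lemma card_border_words_gt_half: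
  assumes "m < n" and "n < 2 * m"
  shows "card (border_words k n m P) = card {v \<in> words k m. P v \<and> has_border v (2 * m - n)}"
proof -
  let ?g = "\<lambda>v. take (n - m) v @ v"
  have "bij_betw (take m) (border_words k n m P) {v \<in> words k m. P v \<and> has_border v (2 * m - n)}"
  proof (rule bij_betw_byWitness[where f' = ?g])
    show "\<forall>w \<in> border_words k n m P. ?g (take m w) = w"
    proof
      fix w
      assume "w \<in> border_words k n m P"
      then have "take m w = drop (n - m) w"
        by (simp add: border_words_def words_def has_border_def)
      moreover have "take (n - m) (take m w) = take (n - m) w"
        using assms by simp
      ultimately show "take (n - m) (take m w) @ take m w = w"
        by simp
    qed
    have take_g: "take m (?g v) = v" if "v \<in> words k m" "has_border v (2 * m - n)" for v
    proof -
      have "take (2 * m - n) v = drop (n - m) v"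
        using that assms by (simp add: words_def has_border_def)
      then show ?thesis
        using that assms by (simp add: words_def mult_2)
    qed
    then show "\<forall>v \<in> {v \<in> words k m. P v \<and> has_border v (2 * m - n)}. take m (?g v) = v"
      by blast
    show "take m ` border_words k n m P \<subseteq> {v \<in> words k m. P v \<and> has_border v (2 * m - n)}"
    proof
      fix v assume "v \<in> take m ` border_words k n m P"
      then obtain w where w: "w \<in> words k n" "has_border w m" "P (take m w)" "v = take m w"
        unfolding border_words_def by auto
      then have "has_border w (2 * m - n)"
        using has_border_overlap assms by (fastforce simp: words_def)
      then show "v \<in> {v \<in> words k m. P v \<and> has_border v (2 * m - n)}"
        using w assms has_border_take_iff[OF w(2)] take_drop_in_words[of w k n 0 m] by auto
    qed
    show "?g ` {v \<in> words k m. P v \<and> has_border v (2 * m - n)} \<subseteq> border_words k n m P"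
      using assms take_g
      by (fastforce simp: border_words_def words_def has_border_def dest: in_set_takeD)
  qed
  then show ?thesis
    by (rule bij_betw_same_card)
qed

lemma border_words_shortest_eq:
  assumes "t < n"
  shows "border_words k n t unbordered =
    {w \<in> words k n. unique_border_len w t} \<union>
    (\<Union>m\<in>{t<..<n}. border_words k n m (\<lambda>v. unique_border_len v t))"
    (is "?S = ?U \<union> ?G")
proof (intro equalityI subsetI)
  fix w
  assume "w \<in> ?S"
  then have w: "w \<in> words k n" "has_border w t" and "unbordered (take t w)"
    by (simp_all add: border_words_def)
  then have shortest: "\<forall>j<t. \<not> has_border w j"
    using unbordered_take_iff[OF w(2)] by simp
  show "w \<in> ?U \<union> ?G"
  proof (cases "\<forall>l. has_border w l \<longrightarrow> l = t")
    case True
    then show ?thesis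
      using w unique_border_len_iff[of w t] by blast
  next
    case False
    then obtain l where l: "has_border w l" "l \<noteq> t"
      by blast
    then have "t < l"
      using shortest linorder_neqE_nat by blast
    define m where "m = (LEAST l. t < l \<and> has_border w l)"
    have m: "t < m" "has_border w m"
      using LeastI[of "\<lambda>l. t < l \<and> has_border w l", OF conjI, OF \<open>t < l\<close> l(1)]
      unfolding m_def by auto
    have "j = t" if "j < m" "has_border w j" for j
    proof -
      have "\<not> t < j"
        using not_less_Least[of j "\<lambda>l. t < l \<and> has_border w l"] that unfolding m_def by blast
      moreover have "\<not> j < t"
        using shortest that(2) by blast
      ultimately show "j = t"
        by simp
    qed
    then have "unique_border_len (take m w) t"
      using m w(2) unique_border_len_take_iff[OF m(2)] by blast
    then have "w \<in> border_words k n m (\<lambda>v. unique_border_len v t)"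
      using w(1) m(2) by (simp add: border_words_def)
    moreover have "m \<in> {t<..<n}"
      using m w(1) by (simp add: has_border_def words_def)
    ultimately show ?thesis
      by blast
  qed
next
  fix w
  assume "w \<in> ?U \<union> ?G"
  then have "w \<in> words k n \<and> has_border w t \<and> (\<forall>j<t. \<not> has_border w j)"
  proof
    assume "w \<in> ?U"
    then have "w \<in> words k n" "has_border w t" "\<forall>l. has_border w l \<longrightarrow> l = t"
      using unique_border_len_iff by blast+
    then show ?thesis
      by (metis less_irrefl)
  next
    assume "w \<in> ?G"
    then obtain m where "w \<in> words k n" "has_border w m" "unique_border_len (take m w) t"
      by (auto simp: border_words_def)
    moreover from this have "t < m" "has_border w t" "\<forall>j<m. has_border w j \<longrightarrow> j = t"
      using unique_border_len_take_iff[of w m t] by blast+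
    ultimately show ?thesis
      by (metis less_trans less_irrefl)
  qed
  then have w: "w \<in> words k n" "has_border w t" and "\<forall>j<t. \<not> has_border w j"
    by blast+
  then have "unbordered (take t w)"
    using unbordered_take_iff[OF w(2)] by blast
  then show "w \<in> ?S"
    using w by (simp add: border_words_def)
qed

lemma unique_border_len_notin_border_words:
  "unique_border_len w t \<Longrightarrow> m \<noteq> t \<Longrightarrow> w \<notin> border_words k n m P"
  unfolding border_words_def unique_border_len_iff by blast

lemma border_words_disjoint:
  assumes "m < m'" and "m \<noteq> t"
  shows "border_words k n m P \<inter> border_words k n m' (\<lambda>v. unique_border_len v t) = {}"
proof -
  have False
    if "has_border w m" "has_border w m'" "unique_border_len (take m' w) t" for w :: "nat list"
    using that assms unique_border_len_take_iff[of w m' t] by blast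
  then show ?thesis
    unfolding border_words_def by blast
qed

lemma card_border_words_unique:
  assumes "t < m" and "m < n"
  shows "card (border_words k n m (\<lambda>v. unique_border_len v t)) =
    (if 2 * m \<le> n then B k m t * k ^ (n - 2 * m) else if 2 * m = n + t then B k m t else 0)"
proof (cases "2 * m \<le> n")
  case True
  then show ?thesis
    using assms card_border_words_le_half[of m n k] by (simp add: B_def)
next
  case False
  have "unique_border_len v t \<and> has_border v (2 * m - n) \<longleftrightarrow>
    unique_border_len v t \<and> 2 * m = n + t" for v :: "nat list"
  proof -
    have "2 * m - n = t \<longleftrightarrow> 2 * m = n + t"
      using False by arith
    then show ?thesis
      using unique_border_len_iff[of v t] by metis
  qed
  then show ?thesis
    using False assms card_border_words_gt_half[of m n k] by (simp add: B_def)
qed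

lemma sum_second_border_counts:
  fixes f :: "nat \<Rightarrow> nat"
  assumes "0 < t" and "t < n" and "\<And>i. i < 2 * t \<Longrightarrow> f i = 0"
  shows "(\<Sum>m\<in>{t<..<n}.
      if 2 * m \<le> n then f m * k ^ (n - 2 * m) else if 2 * m = n + t then f m else 0) =
    (\<Sum>i = 2 * t..n div 2. f i * k ^ (n - 2 * i))
      + (if even (n + t) then f ((n + t) div 2) else 0)"
proof -
  have "(\<Sum>m\<in>{t<..<n}. if 2 * m \<le> n then f m * k ^ (n - 2 * m) else 0) =
    (\<Sum>i = 2 * t..n div 2. f i * k ^ (n - 2 * i))"
    using assms by (intro sum.mono_neutral_cong_right) auto
  moreover have "(\<Sum>m\<in>{t<..<n}. if 2 * m = n + t then f m else 0) =
    (if even (n + t) then f ((n + t) div 2) else 0)"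
  proof (cases "even (n + t)")
    case True
    then have "2 * m = n + t \<longleftrightarrow> m = (n + t) div 2" for m
      by auto
    moreover have "(n + t) div 2 \<in> {t<..<n}"
      using assms(2) True unfolding greaterThanLessThan_iff by presburger
    ultimately show ?thesis
      using True by simp
  next
    case False
    then have "2 * m \<noteq> n + t" for m
      by (metis dvd_triv_left)
    then show ?thesis
      using False by simp
  qed
  moreover have "(if 2 * m \<le> n then f m * k ^ (n - 2 * m) else if 2 * m = n + t then f m else 0) =
    (if 2 * m \<le> n then f m * k ^ (n - 2 * m) else 0) + (if 2 * m = n + t then f m else 0)" for m
    using assms(1) by simp
  ultimately show ?thesis
    by (simp add: sum.distrib)
qed

lemma u_mult_power_eq:
  assumes "0 < t" and "2 * t \<le> n"
  shows "u k t * k ^ (n - 2 * t) =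
    B k n t + (\<Sum>i = 2 * t..n div 2. B k i t * k ^ (n - 2 * i))
      + (if even (n + t) then B k ((n + t) div 2) t else 0)"
proof -
  let ?G = "\<lambda>m. border_words k n m (\<lambda>v. unique_border_len v t)"
  have tn: "t < n"
    using assms by simp
  have fin: "finite (border_words k n m P)" for m P
    unfolding border_words_def using finite_words by simp
  have "u k t * k ^ (n - 2 * t) = card (border_words k n t unbordered)"
    using assms card_border_words_le_half[of t n k] by (simp add: u_def)
  also have "\<dots> = B k n t + card (\<Union>m\<in>{t<..<n}. ?G m)"
    unfolding border_words_shortest_eq[OF tn] B_def
    using fin unique_border_len_notin_border_words
    by (subst card_Un_disjoint) (auto simp: finite_words)
  also have "card (\<Union>m\<in>{t<..<n}. ?G m) = (\<Sum>m\<in>{t<..<n}. card (?G m))"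
  proof (intro card_UN_disjoint ballI impI)
    fix i j
    assume "i \<in> {t<..<n}" "j \<in> {t<..<n}" "i \<noteq> j"
    then show "?G i \<inter> ?G j = {}"
      using border_words_disjoint[of i j t] border_words_disjoint[of j i t]
      by (cases "i < j") (auto simp: Int_commute)
  qed (simp_all add: fin)
  also have "(\<Sum>m\<in>{t<..<n}. card (?G m)) = (\<Sum>m\<in>{t<..<n}.
      if 2 * m \<le> n then B k m t * k ^ (n - 2 * m) else if 2 * m = n + t then B k m t else 0)"
    using card_border_words_unique by (intro sum.cong) auto
  also have "\<dots> = (\<Sum>i = 2 * t..n div 2. B k i t * k ^ (n - 2 * i))
      + (if even (n + t) then B k ((n + t) div 2) t else 0)"
    using sum_second_border_counts[of t n "\<lambda>i. B k i t"] assms(1) tn B_eq_0 by simp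
  finally show ?thesis
    by (simp only: add.assoc)
qed

theorem theorem9:
  fixes k n t :: nat
  assumes "k \<ge> 2" and "1 \<le> t" and "t < n"
  shows "int (B k n t) =
    (if n < 2 * t then 0
     else if odd (n + t) then
       int (u k t) * int k ^ (n - 2 * t)
         - (\<Sum>i = 2 * t..n div 2. int (B k i t) * int k ^ (n - 2 * i))
     else
       int (u k t) * int k ^ (n - 2 * t) - int (B k ((n + t) div 2) t)
         - (\<Sum>i = 2 * t..n div 2. int (B k i t) * int k ^ (n - 2 * i)))"
proof (cases "n < 2 * t")
  case True
  then show ?thesis
    using B_eq_0 by simp
next
  case False
  then have "int (u k t * k ^ (n - 2 * t)) =
    int (B k n t + (\<Sum>i = 2 * t..n div 2. B k i t * k ^ (n - 2 * i))
      + (if even (n + t) then B k ((n + t) div 2) t else 0))"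
    using u_mult_power_eq[of t n k] assms(2) by simp
  then show ?thesis
    using False by simp
qed

end
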